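(* Let $X,Y$ be finite sets with $Y\neq\emptyset$, let $A\in\{-1,1\}^{X\times Y}$ with $\operatorname{Ldim}(A)=d$, and let $\varepsilon\in(0,1/2)$. Then there exist a function $\sigma:X\to\{-1,1\}$ and a subset $S\subseteq Y$ with $|S|\ge \varepsilon^d|Y|$ such that for every $x\in X$, $$\Pr_{y\in S}\bigl[A(x,y)\ne \sigma(x)\bigr]\le \varepsilon,$$ where $y$ is uniform in $S$.
   Context: A mistake tree of depth $d$ over a domain $X$ is a complete binary tree of depth $d$ in which each internal node $\nu$ is labelled with an element $x(\nu)\in X$, and each edge $e$ from a node to a child is labelled with a sign $\sigma(e)\in\{-1,1\}$, where $-1$ indicates the left child and $+1$ the right child. A matrix $A\in\{-1,1\}^{X\times Y}$ shatters a mistake tree of depth $d$ over $X$ if for every root-to-leaf path $(\nu_1,\dots,\nu_{d+1})$ there is a column $y\in Y$ with $A(x(\nu_i),y)=\sigma(\nu_i\nu_{i+1})$ for all $i\in[d]$. The Littlestone dimension $\operatorname{Ldim}(A)$ is the largest $d$ such that $A$ shatters some mistake tree of depth $d$ over $X$ (a tree of depth $0$ is always shattered when $Y\ne\emptyset$). *)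

theory Defs
  imports Main "HOL-Analysis.Analysis"
begin

text \<open>Binary trees whose internal nodes carry a domain element. The left child
  corresponds to edge sign -1, the right child to edge sign +1.\<close>
datatype 'x mtree = Leaf | Node 'x "'x mtree" "'x mtree"

fun complete_depth :: "'x mtree \<Rightarrow> nat \<Rightarrow> bool" where
  "complete_depth Leaf d = (d = 0)"
| "complete_depth (Node x l r) d =
     (\<exists>d'. d = Suc d' \<and> complete_depth l d' \<and> complete_depth r d')"

fun node_labels :: "'x mtree \<Rightarrow> 'x set" where
  "node_labels Leaf = {}"
| "node_labels (Node x l r) = insert x (node_labels l \<union> node_labels r)"

text \<open>Root-to-leaf paths, recorded as the list of pairs (x(nu_i), sign of edge nu_i nu_(i+1)).\<close>
fun tree_paths :: "'x mtree \<Rightarrow> ('x \<times> int) list set" where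
  "tree_paths Leaf = {[]}"
| "tree_paths (Node x l r) =
     ((#) (x, -1)) ` tree_paths l \<union> ((#) (x, 1)) ` tree_paths r"

definition shatters :: "('x \<Rightarrow> 'y \<Rightarrow> int) \<Rightarrow> 'y set \<Rightarrow> 'x mtree \<Rightarrow> bool" where
  "shatters A Y t \<longleftrightarrow>
     (\<forall>p \<in> tree_paths t. \<exists>y \<in> Y. \<forall>(x, s) \<in> set p. A x y = s)"

definition mistake_tree :: "'x set \<Rightarrow> nat \<Rightarrow> 'x mtree \<Rightarrow> bool" where
  "mistake_tree X d t \<longleftrightarrow> complete_depth t d \<and> node_labels t \<subseteq> X"

definition Ldim :: "'x set \<Rightarrow> 'y set \<Rightarrow> ('x \<Rightarrow> 'y \<Rightarrow> int) \<Rightarrow> nat" where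
  "Ldim X Y A = (GREATEST d. \<exists>t. mistake_tree X d t \<and> shatters A Y t)"

end

theory Submission
  imports Defs
begin

text \<open>Call \<open>x\<close> an \<open>\<epsilon>\<close>-split of \<open>S\<close> if both sign classes \<open>S\<^sub>x\<^sup>-\<close>, \<open>S\<^sub>x\<^sup>+\<close> of row \<open>x\<close>
  contain more than an \<open>\<epsilon>\<close>-fraction of \<open>S\<close>. If no row splits \<open>S\<close>, the majority sign of
  every row errs on at most an \<open>\<epsilon>\<close>-fraction of \<open>S\<close>. Otherwise a shattered tree for each
  sign class of a split \<open>x\<close> would combine, under a root labelled \<open>x\<close>, into a deeper
  shattered tree for \<open>S\<close>; so one class, of size \<open>> \<epsilon>|S|\<close>, has strictly smaller
  Littlestone dimension, and we recurse into it. After at most \<open>Ldim\<close> steps no split is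
  left, having kept an \<open>\<epsilon>\<^sup>d\<close>-fraction of \<open>Y\<close>.\<close>

definition shatters_depth :: "'x set \<Rightarrow> ('x \<Rightarrow> 'y \<Rightarrow> int) \<Rightarrow> 'y set \<Rightarrow> nat \<Rightarrow> bool" where
  "shatters_depth X A S d \<longleftrightarrow> (\<exists>t. mistake_tree X d t \<and> shatters A S t)"

definition splits :: "real \<Rightarrow> ('x \<Rightarrow> 'y \<Rightarrow> int) \<Rightarrow> 'y set \<Rightarrow> 'x \<Rightarrow> bool" where
  "splits \<epsilon> A S x \<longleftrightarrow>
     \<epsilon> * card S < card {y \<in> S. A x y = -1} \<and> \<epsilon> * card S < card {y \<in> S. A x y = 1}"

lemma shatters_Leaf: "shatters A S Leaf \<longleftrightarrow> S \<noteq> {}"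
  unfolding shatters_def by auto

lemma shatters_Node:
  "shatters A S (Node x l r) \<longleftrightarrow>
     shatters A {y \<in> S. A x y = -1} l \<and> shatters A {y \<in> S. A x y = 1} r"
  unfolding shatters_def by (auto simp: ball_Un)

lemma complete_depth_0_iff: "complete_depth t 0 \<longleftrightarrow> t = Leaf"
  by (cases t) auto

lemma shatters_depth_0: "shatters_depth X A S 0 \<longleftrightarrow> S \<noteq> {}"
  by (auto simp: shatters_depth_def mistake_tree_def complete_depth_0_iff shatters_Leaf)

lemma shatters_depth_SucI:
  assumes "x \<in> X"
    and "shatters_depth X A {y \<in> S. A x y = -1} d"
    and "shatters_depth X A {y \<in> S. A x y = 1} d"
  shows "shatters_depth X A S (Suc d)"
proof -
  from assms obtain l r where
    "mistake_tree X d l" "shatters A {y \<in> S. A x y = -1} l"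
    "mistake_tree X d r" "shatters A {y \<in> S. A x y = 1} r"
    by (auto simp: shatters_depth_def)
  then have "mistake_tree X (Suc d) (Node x l r) \<and> shatters A S (Node x l r)"
    using \<open>x \<in> X\<close> by (auto simp: mistake_tree_def shatters_Node)
  then show ?thesis
    unfolding shatters_depth_def by blast
qed

lemma shatters_complete_depth_less_card:
  assumes "shatters A S t" "complete_depth t d" "finite S"
  shows "d < card S"
  using assms
proof (induction t arbitrary: d S)
  case Leaf
  then show ?case by (simp add: shatters_Leaf card_gt_0_iff)
next
  case (Node x l r)
  define S_neg where "S_neg = {y \<in> S. A x y = -1}"
  define S_pos where "S_pos = {y \<in> S. A x y = 1}"
  from Node.prems obtain d' where d': "d = Suc d'" "complete_depth l d'" "complete_depth r d'"
    by auto
  have "d' < card S_neg" "d' < card S_pos"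
    using Node d' by (auto simp: shatters_Node S_neg_def S_pos_def)
  moreover have "card S_neg + card S_pos = card (S_neg \<union> S_pos)"
    using Node.prems by (intro card_Un_disjoint[symmetric]) (auto simp: S_neg_def S_pos_def)
  moreover have "card (S_neg \<union> S_pos) \<le> card S"
    using Node.prems by (intro card_mono) (auto simp: S_neg_def S_pos_def)
  ultimately show ?case
    using d' by simp
qed

lemma not_shatters_depth_Suc_Ldim:
  assumes "finite Y"
  shows "\<not> shatters_depth X A Y (Suc (Ldim X Y A))"
proof
  assume shattered: "shatters_depth X A Y (Suc (Ldim X Y A))"
  have bounded: "k \<le> card Y" if "shatters_depth X A Y k" for k
    using that shatters_complete_depth_less_card[OF _ _ assms]
    by (fastforce simp: shatters_depth_def mistake_tree_def)
  have "Suc (Ldim X Y A) \<le> (GREATEST k. shatters_depth X A Y k)"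
    using Greatest_le_nat[of "shatters_depth X A Y", OF shattered bounded] .
  then show False
    by (simp add: Ldim_def shatters_depth_def)
qed

lemma majority_vote_if_no_split:
  assumes "\<forall>x \<in> X. \<forall>y \<in> S. A x y \<in> {-1, 1}"
    and "\<forall>x \<in> X. \<not> splits \<epsilon> A S x"
  shows "\<exists>\<sigma> :: 'x \<Rightarrow> int. (\<forall>x \<in> X. \<sigma> x \<in> {-1, 1}) \<and>
           (\<forall>x \<in> X. real (card {y \<in> S. A x y \<noteq> \<sigma> x}) \<le> \<epsilon> * card S)"
proof -
  define \<sigma> where
    "\<sigma> x = (if real (card {y \<in> S. A x y = -1}) \<le> \<epsilon> * card S then 1 else (-1 :: int))" for x
  have "real (card {y \<in> S. A x y \<noteq> \<sigma> x}) \<le> \<epsilon> * card S" if "x \<in> X" for x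
  proof (cases "real (card {y \<in> S. A x y = -1}) \<le> \<epsilon> * card S")
    case True
    then have "{y \<in> S. A x y \<noteq> \<sigma> x} = {y \<in> S. A x y = -1}"
      using assms(1) \<open>x \<in> X\<close> by (auto simp: \<sigma>_def)
    then show ?thesis using True by simp
  next
    case False
    then have "{y \<in> S. A x y \<noteq> \<sigma> x} = {y \<in> S. A x y = 1}"
      using assms(1) \<open>x \<in> X\<close> by (auto simp: \<sigma>_def)
    then show ?thesis using False assms(2) \<open>x \<in> X\<close> by (force simp: splits_def)
  qed
  then show ?thesis
    by (intro exI[of _ \<sigma>]) (auto simp: \<sigma>_def)
qed

lemma split_class_not_shatters_depth:
  assumes "x \<in> X" "splits \<epsilon> A S x" "\<not> shatters_depth X A S (Suc d)"
  obtains T where "T \<subseteq> S" "\<epsilon> * card S < card T" "\<not> shatters_depth X A T d"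
proof -
  consider "\<not> shatters_depth X A {y \<in> S. A x y = -1} d"
    | "\<not> shatters_depth X A {y \<in> S. A x y = 1} d"
    using shatters_depth_SucI[OF assms(1)] assms(3) by metis
  then show ?thesis
  proof cases
    case 1
    show ?thesis
      by (rule that[of "{y \<in> S. A x y = -1}"]) (use 1 assms(2) in \<open>auto simp: splits_def\<close>)
  next
    case 2
    show ?thesis
      by (rule that[of "{y \<in> S. A x y = 1}"]) (use 2 assms(2) in \<open>auto simp: splits_def\<close>)
  qed
qed

lemma large_subset_with_majority_vote:
  fixes \<epsilon> :: real
  assumes "\<forall>x \<in> X. \<forall>y \<in> S. A x y \<in> {-1, 1}" "finite S" "0 < \<epsilon>" "\<epsilon> \<le> 1"
    and "\<not> shatters_depth X A S (Suc d)"
  shows "\<exists>\<sigma> :: 'x \<Rightarrow> int. \<exists>S' \<subseteq> S. (\<forall>x \<in> X. \<sigma> x \<in> {-1, 1}) \<and>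
           \<epsilon> ^ d * card S \<le> card S' \<and>
           (\<forall>x \<in> X. real (card {y \<in> S'. A x y \<noteq> \<sigma> x}) \<le> \<epsilon> * card S')"
  using assms
proof (induction d arbitrary: S)
  case (0 S)
  have "\<forall>x \<in> X. \<not> splits \<epsilon> A S x"
  proof (intro ballI notI)
    fix x assume "x \<in> X" "splits \<epsilon> A S x"
    then obtain T where "T \<subseteq> S" "\<epsilon> * card S < card T" "\<not> shatters_depth X A T 0"
      by (rule split_class_not_shatters_depth[OF _ _ "0.prems"(5)])
    then show False
      using \<open>0 < \<epsilon>\<close> by (simp add: shatters_depth_0 mult_less_0_iff)
  qed
  then obtain \<sigma> :: "'x \<Rightarrow> int" where
    "\<forall>x \<in> X. \<sigma> x \<in> {-1, 1}" "\<forall>x \<in> X. real (card {y \<in> S. A x y \<noteq> \<sigma> x}) \<le> \<epsilon> * card S"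
    using majority_vote_if_no_split[OF "0.prems"(1)] by blast
  then show ?case
    by (intro exI[of _ \<sigma>] exI[of _ S]) auto
next
  case (Suc d S)
  show ?case
  proof (cases "\<exists>x \<in> X. splits \<epsilon> A S x")
    case True
    then obtain x where "x \<in> X" "splits \<epsilon> A S x"
      by blast
    then obtain T where T: "T \<subseteq> S" "\<epsilon> * card S < card T" "\<not> shatters_depth X A T (Suc d)"
      by (rule split_class_not_shatters_depth[OF _ _ Suc.prems(5)])
    have "\<forall>x \<in> X. \<forall>y \<in> T. A x y \<in> {-1, 1}" "finite T"
      using T(1) Suc.prems(1,2) finite_subset by blast+
    then obtain \<sigma> :: "'x \<Rightarrow> int" and S' where S':
      "S' \<subseteq> T" "\<forall>x \<in> X. \<sigma> x \<in> {-1, 1}" "\<epsilon> ^ d * card T \<le> card S'"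
      "\<forall>x \<in> X. real (card {y \<in> S'. A x y \<noteq> \<sigma> x}) \<le> \<epsilon> * card S'"
      using Suc.IH[OF _ _ Suc.prems(3,4) T(3)] by blast
    have "\<epsilon> ^ Suc d * card S = \<epsilon> ^ d * (\<epsilon> * card S)"
      by simp
    also have "\<dots> \<le> \<epsilon> ^ d * card T"
      using T(2) \<open>0 < \<epsilon>\<close> by (intro mult_left_mono) auto
    finally show ?thesis
      using S' T(1) by (intro exI[of _ \<sigma>] exI[of _ S']) auto
  next
    case False
    then obtain \<sigma> :: "'x \<Rightarrow> int" where "\<forall>x \<in> X. \<sigma> x \<in> {-1, 1}"
      "\<forall>x \<in> X. real (card {y \<in> S. A x y \<noteq> \<sigma> x}) \<le> \<epsilon> * card S"
      using majority_vote_if_no_split[OF Suc.prems(1)] by blast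
    moreover have "\<epsilon> ^ Suc d * card S \<le> card S"
      using Suc.prems(3,4) by (intro mult_left_le_one_le power_le_one) auto
    ultimately show ?thesis
      by (intro exI[of _ \<sigma>] exI[of _ S]) auto
  qed
qed

theorem proposition2p1:
  fixes X :: "'x set" and Y :: "'y set" and A :: "'x \<Rightarrow> 'y \<Rightarrow> int"
    and d :: nat and \<epsilon> :: real
  assumes "finite X" and "finite Y" and "Y \<noteq> {}"
    and "\<forall>x \<in> X. \<forall>y \<in> Y. A x y \<in> {-1, 1}"
    and "Ldim X Y A = d"
    and "0 < \<epsilon>" and "\<epsilon> < 1/2"
  shows "\<exists>\<sigma> :: 'x \<Rightarrow> int. \<exists>S \<subseteq> Y.
           (\<forall>x \<in> X. \<sigma> x \<in> {-1, 1}) \<and>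
           real (card S) \<ge> \<epsilon> ^ d * real (card Y) \<and>
           (\<forall>x \<in> X. real (card {y \<in> S. A x y \<noteq> \<sigma> x}) / real (card S) \<le> \<epsilon>)"
proof -
  have "\<not> shatters_depth X A Y (Suc d)"
    using not_shatters_depth_Suc_Ldim[OF \<open>finite Y\<close>] assms(5) by blast
  moreover have "\<epsilon> \<le> 1"
    using assms(7) by simp
  ultimately obtain \<sigma> :: "'x \<Rightarrow> int" and S where S:
    "S \<subseteq> Y" "\<forall>x \<in> X. \<sigma> x \<in> {-1, 1}" "\<epsilon> ^ d * card Y \<le> card S"
    "\<forall>x \<in> X. real (card {y \<in> S. A x y \<noteq> \<sigma> x}) \<le> \<epsilon> * card S"
    using large_subset_with_majority_vote[OF assms(4,2,6)] by blast
  have "0 < \<epsilon> ^ d * card Y"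
    using assms(2,3,6) by (simp add: card_gt_0_iff)
  then have "0 < real (card S)"
    using S(3) by linarith
  then have "\<forall>x \<in> X. real (card {y \<in> S. A x y \<noteq> \<sigma> x}) / card S \<le> \<epsilon>"
    using S(4) by (simp add: pos_divide_le_eq)
  then show ?thesis
    using S(1-3) by blast
qed

end
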